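(* The multidegree of $H_3\subset G(1,4)$ with respect to the $3$-dimensional Schubert cycles is $(\alpha,\beta)=(1,2)$: a general Schubert variety $\Omega(0,4)$ meets $H_3$ in exactly $1$ point and a general Schubert variety $\Omega(1,3)$ meets $H_3$ in exactly $2$ points; equivalently $[H_3]=1\cdot[\Omega(0,4)]+2\cdot[\Omega(1,3)]$ in $H^6(G(1,4),\mathbb{Z})$.
   Context: Binary quartics up to scalar form $\mathbb{P}^4$; $G(1,4)$ is the Grassmannian of lines in $\mathbb{P}^4$; $H(f)=f_{xx}f_{yy}-f_{xy}^2$ is the Hessian of a quartic $f$; $H_3=\overline{\{\langle f,H(f)\rangle\in G(1,4): f \text{ has four simple roots}\}}$. $\Omega(0,4)$ is the Schubert variety of lines through a fixed point of $\mathbb{P}^4$, and $\Omega(1,3)$ is the Schubert variety of lines meeting a fixed line $\ell$ and contained in a fixed $\mathbb{P}^3\supset\ell$; both have dimension $3$ and degrees $1$ and $2$ respectively in the Plücker embedding. *)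

theory Defs
  imports Complex_Main
begin

text \<open>Binary forms over the complex numbers are represented by coefficient functions:
  a form of degree d is c :: nat \<Rightarrow> complex, meaning the sum over i \<le> d of
  c i * x^(d-i) * y^i, with c i = 0 for i > d.  Binary quartics (= affine cone over P^4)
  are the coefficient functions supported in {0..4}.\<close>

type_synonym bform = "nat \<Rightarrow> complex"

definition quartics :: "bform set" where
  "quartics = {c. \<forall>i>4. c i = 0}"

definition dX :: "nat \<Rightarrow> bform \<Rightarrow> bform" where
  "dX d c = (\<lambda>i. of_nat (d - i) * c i)"   \<comment> \<open>d/dx of a form of degree d\<close>

definition dY :: "bform \<Rightarrow> bform" where
  "dY c = (\<lambda>i. of_nat (Suc i) * c (Suc i))"

definition fmul :: "bform \<Rightarrow> bform \<Rightarrow> bform" where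
  "fmul c e = (\<lambda>k. \<Sum>i\<le>k. c i * e (k - i))"

definition hess :: "bform \<Rightarrow> bform" where
  "hess f = (\<lambda>k. fmul (dX 3 (dX 4 f)) (dY (dY f)) k
               - fmul (dY (dX 4 f)) (dY (dX 4 f)) k)"

text \<open>The linear form q x - p y, vanishing exactly at the point [p:q] of P^1.\<close>
definition linf :: "complex \<Rightarrow> complex \<Rightarrow> bform" where
  "linf p q = (\<lambda>i. if i = 0 then q else if i = 1 then - p else 0)"

definition four_simple_roots :: "bform \<Rightarrow> bool" where
  "four_simple_roots f \<longleftrightarrow>
     (\<exists>p q :: nat \<Rightarrow> complex. \<exists>a. a \<noteq> 0 \<and>
        (\<forall>j<4. p j \<noteq> 0 \<or> q j \<noteq> 0) \<and>
        (\<forall>j<4. \<forall>k<4. j \<noteq> k \<longrightarrow> p j * q k \<noteq> p k * q j) \<and>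
        f = (\<lambda>i. a * fmul (fmul (fmul (linf (p 0) (q 0)) (linf (p 1) (q 1)))
                                   (linf (p 2) (q 2))) (linf (p 3) (q 3)) i))"

definition lspan :: "bform list \<Rightarrow> bform set" where
  "lspan vs = {(\<lambda>i. \<Sum>k<length vs. c k * (vs ! k) i) | c. True}"

definition lindep_free :: "bform list \<Rightarrow> bool" where
  "lindep_free vs \<longleftrightarrow>
     (\<forall>c. (\<lambda>i. \<Sum>k<length vs. c k * (vs ! k) i) = (\<lambda>i. 0) \<longrightarrow> (\<forall>k<length vs. c k = 0))"

text \<open>G(1,4): lines of P^4 = 2-dimensional linear subspaces of the space of quartics.\<close>
definition line_basis :: "bform set \<Rightarrow> bform \<Rightarrow> bform \<Rightarrow> bool" where
  "line_basis L f g \<longleftrightarrow> f \<in> quartics \<and> g \<in> quartics \<and> lindep_free [f, g] \<and> L = lspan [f, g]"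

definition G14 :: "bform set set" where
  "G14 = {L. \<exists>f g. line_basis L f g}"

inductive_set polyfun :: "(('v \<Rightarrow> complex) \<Rightarrow> complex) set" where
  pconst: "(\<lambda>x. c) \<in> polyfun"
| pvar: "(\<lambda>x. x v) \<in> polyfun"
| padd: "F \<in> polyfun \<Longrightarrow> G \<in> polyfun \<Longrightarrow> (\<lambda>x. F x + G x) \<in> polyfun"
| pmul: "F \<in> polyfun \<Longrightarrow> G \<in> polyfun \<Longrightarrow> (\<lambda>x. F x * G x) \<in> polyfun"

definition pluecker :: "bform \<Rightarrow> bform \<Rightarrow> (nat \<times> nat \<Rightarrow> complex)" where
  "pluecker f g = (\<lambda>(i, j). f i * g j - f j * g i)"

text \<open>Zariski closure in G(1,4) (Pluecker embedding) of a set S of lines.\<close>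
definition zclosure :: "bform set set \<Rightarrow> bform set set" where
  "zclosure S = {L \<in> G14. \<forall>F \<in> polyfun.
      (\<forall>M \<in> S. \<forall>f g. line_basis M f g \<longrightarrow> F (pluecker f g) = 0) \<longrightarrow>
      (\<forall>f g. line_basis L f g \<longrightarrow> F (pluecker f g) = 0)}"

definition H3 :: "bform set set" where
  "H3 = zclosure {lspan [f, hess f] | f. f \<in> quartics \<and> four_simple_roots f}"

definition Omega04 :: "bform \<Rightarrow> bform set set" where
  "Omega04 p = {L \<in> G14. p \<in> L}"

definition Omega13 :: "bform \<Rightarrow> bform \<Rightarrow> bform \<Rightarrow> bform \<Rightarrow> bform set set" where
  "Omega13 u0 u1 u2 u3 = {L \<in> G14. L \<subseteq> lspan [u0, u1, u2, u3] \<and>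
                                    (\<exists>v \<in> L \<inter> lspan [u0, u1]. v \<noteq> (\<lambda>i. 0))}"

definition frame_vec :: "(nat \<times> nat \<Rightarrow> complex) \<Rightarrow> nat \<Rightarrow> bform" where
  "frame_vec u j = (\<lambda>i. u (j, i))"

end

theory Submission
  imports Defs "HOL-Computational_Algebra.Polynomial" "HOL-Computational_Algebra.Fundamental_Theorem_Algebra"
begin

text \<open>
  Every line L in H3 is closed under the Hessian: for the pencil spanned by f and H(f) this is
  the classical syzygy H(a f + b H(f)) = (2ab I + b^2 J) f + (a^2 - b^2 I) H(f), and
  closedness is a polynomial condition on the Pluecker coordinates of L, so it survives the
  Zariski closure.  Conversely, every pencil spanned by a quartic f and H(f) lies in H3, because
  quartics with four simple roots are Zariski dense.  Hence the only line of H3 through a general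
  point p is the pencil of p and H(p).  A line of H3 in \<Omega>(1,3) contains a point v of the
  fixed line \<ell> and then H(v), so it is the pencil of v and H(v), with H(v) in the fixed 3-space;
  for a general flag this is one quadratic condition on v \<in> \<ell> with two distinct roots.
\<close>

lemma polyfun_neg: "F \<in> polyfun \<Longrightarrow> (\<lambda>x. - F x) \<in> polyfun"
  using polyfun.pmul[OF polyfun.pconst[of "-1"]] by simp

lemma polyfun_sub: "F \<in> polyfun \<Longrightarrow> G \<in> polyfun \<Longrightarrow> (\<lambda>x. F x - G x) \<in> polyfun"
  using polyfun.padd[OF _ polyfun_neg] by simp

lemma polyfun_sum:
  "finite A \<Longrightarrow> (\<And>a. a \<in> A \<Longrightarrow> (\<lambda>x. F a x) \<in> polyfun) \<Longrightarrow> (\<lambda>x. \<Sum>a\<in>A. F a x) \<in> polyfun"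
  by (induction A rule: finite_induct) (simp_all add: polyfun.pconst polyfun.padd)

lemma polyfun_compose:
  "F \<in> polyfun \<Longrightarrow> (\<And>v. (\<lambda>x. A x v) \<in> polyfun) \<Longrightarrow> (\<lambda>x. F (A x)) \<in> polyfun"
  by (induction F rule: polyfun.induct) (simp_all add: polyfun.intros)

lemma polyfun_on_line:
  "G \<in> polyfun \<Longrightarrow> \<exists>p. \<forall>t. G (\<lambda>v. x0 v + t * (x1 v - x0 v)) = poly p t"
proof (induction G rule: polyfun.induct)
  case (pconst c) then show ?case by (intro exI[of _ "[:c:]"]) simp
next
  case (pvar v) then show ?case by (intro exI[of _ "[:x0 v, x1 v - x0 v:]"]) (simp add: algebra_simps)
next
  case (padd F G)
  then obtain p q where "\<forall>t. F (\<lambda>v. x0 v + t * (x1 v - x0 v)) = poly p t"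
    "\<forall>t. G (\<lambda>v. x0 v + t * (x1 v - x0 v)) = poly q t" by blast
  then show ?case by (intro exI[of _ "p + q"]) simp
next
  case (pmul F G)
  then obtain p q where "\<forall>t. F (\<lambda>v. x0 v + t * (x1 v - x0 v)) = poly p t"
    "\<forall>t. G (\<lambda>v. x0 v + t * (x1 v - x0 v)) = poly q t" by blast
  then show ?case by (intro exI[of _ "p * q"]) simp
qed

lemma polyfun_eq_0_by_density:
  fixes G B :: "('v \<Rightarrow> complex) \<Rightarrow> complex"
  assumes G: "G \<in> polyfun" and B: "B \<in> polyfun" and GB: "\<And>x. B x \<noteq> 0 \<Longrightarrow> G x = 0"
    and B1: "B x1 \<noteq> 0"
  shows "G x0 = 0"
proof -
  obtain p where p: "\<forall>t. G (\<lambda>v. x0 v + t * (x1 v - x0 v)) = poly p t"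
    using polyfun_on_line[OF G] by blast
  obtain q where q: "\<forall>t. B (\<lambda>v. x0 v + t * (x1 v - x0 v)) = poly q t"
    using polyfun_on_line[OF B] by blast
  have "poly (p * q) t = 0" for t
    using GB[of "\<lambda>v. x0 v + t * (x1 v - x0 v)"] p q by (cases "poly q t = 0") auto
  then have pq: "p * q = 0" using poly_all_0_iff_0 by blast
  have "poly q 1 = B x1" using q[rule_format, of 1] by simp
  then have "p = 0" using pq B1 by auto
  then show ?thesis using p[rule_format, of 0] by simp
qed

definition polyvec :: "(('v \<Rightarrow> complex) \<Rightarrow> bform) \<Rightarrow> bool" where
  "polyvec a \<longleftrightarrow> (\<forall>i. (\<lambda>x. a x i) \<in> polyfun)"

lemma polyvecD: "polyvec a \<Longrightarrow> (\<lambda>x. a x i) \<in> polyfun"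
  by (simp add: polyvec_def)

lemma polyvec_id: "polyvec (\<lambda>x. x)"
  by (simp add: polyvec_def polyfun.pvar)

lemma polyvec_frame_vec: "polyvec (\<lambda>u. frame_vec u j)"
  by (simp add: polyvec_def frame_vec_def polyfun.pvar)

lemma polyvec_add: "polyvec a \<Longrightarrow> polyvec b \<Longrightarrow> polyvec (\<lambda>x i. a x i + b x i)"
  unfolding polyvec_def by (auto intro: polyfun.padd)

lemma polyvec_diff: "polyvec a \<Longrightarrow> polyvec b \<Longrightarrow> polyvec (\<lambda>x i. a x i - b x i)"
  unfolding polyvec_def by (auto intro: polyfun_sub)

lemma polyvec_smult: "polyvec a \<Longrightarrow> polyvec (\<lambda>x i. c * a x i)"
  unfolding polyvec_def by (auto intro: polyfun.pmul polyfun.pconst)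

lemma polyvec_fmul: "polyvec a \<Longrightarrow> polyvec b \<Longrightarrow> polyvec (\<lambda>x. fmul (a x) (b x))"
  unfolding polyvec_def fmul_def by (intro allI polyfun_sum polyfun.pmul) auto

lemma polyvec_linf: "polyvec (\<lambda>x. linf (x a) (x b))"
  unfolding polyvec_def
proof
  fix i show "(\<lambda>x. linf (x a) (x b) i) \<in> polyfun"
    unfolding linf_def by (cases "i = 0"; cases "i = 1") (auto intro: polyfun.intros polyfun_neg)
qed

lemma polyvec_hess:
  assumes "polyvec a" shows "polyvec (\<lambda>x. hess (a x))"
proof -
  have a: "(\<lambda>x. a x i) \<in> polyfun" for i using assms by (rule polyvecD)
  show ?thesis unfolding polyvec_def hess_def fmul_def dX_def dY_def
    by (intro allI polyfun_sub polyfun_sum polyfun.pmul polyfun.pconst) (simp_all add: a)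
qed

lemma polyfun_pluecker:
  assumes "polyvec a" "polyvec b" shows "(\<lambda>x. pluecker (a x) (b x) v) \<in> polyfun"
proof -
  obtain i j where v: "v = (i, j)" by (cases v)
  show ?thesis unfolding v pluecker_def
    using assms by (simp add: polyfun_sub polyfun.pmul polyvecD)
qed

lemma lspan_pair_iff: "h \<in> lspan [f, g] \<longleftrightarrow> (\<exists>a b. h = (\<lambda>i. a * f i + b * g i))"
proof
  assume "h \<in> lspan [f, g]"
  then have "\<exists>c. h = (\<lambda>i. \<Sum>k<length [f,g]. c k * ([f, g] ! k) i)"
    unfolding lspan_def by blast
  then obtain c where "h = (\<lambda>i. \<Sum>k<length [f,g]. c k * ([f, g] ! k) i)" ..
  then have "h = (\<lambda>i. c 0 * f i + c 1 * g i)"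
    by (simp add: numeral_eq_Suc lessThan_Suc add.commute)
  then show "\<exists>a b. h = (\<lambda>i. a * f i + b * g i)" by blast
next
  assume "\<exists>a b. h = (\<lambda>i. a * f i + b * g i)"
  then obtain a b where h: "h = (\<lambda>i. a * f i + b * g i)" by blast
  define c where "c = (\<lambda>k::nat. if k = 0 then a else b)"
  have "h = (\<lambda>i. \<Sum>k<length [f,g]. c k * ([f, g] ! k) i)"
    by (simp add: h c_def numeral_eq_Suc lessThan_Suc add.commute)
  then show "h \<in> lspan [f, g]" unfolding lspan_def by blast
qed

lemma lspan_four_iff: "h \<in> lspan [u0, u1, u2, u3] \<longleftrightarrow>
   (\<exists>a b c d. h = (\<lambda>i. a * u0 i + b * u1 i + c * u2 i + d * u3 i))"
proof
  assume "h \<in> lspan [u0, u1, u2, u3]"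
  then have "\<exists>c. h = (\<lambda>i. \<Sum>k<length [u0, u1, u2, u3]. c k * ([u0, u1, u2, u3] ! k) i)"
    unfolding lspan_def by blast
  then obtain c where "h = (\<lambda>i. \<Sum>k<length [u0, u1, u2, u3]. c k * ([u0, u1, u2, u3] ! k) i)" ..
  then have "h = (\<lambda>i. c 0 * u0 i + c 1 * u1 i + c 2 * u2 i + c 3 * u3 i)"
    by (simp add: numeral_eq_Suc lessThan_Suc algebra_simps)
  then show "\<exists>a b c d. h = (\<lambda>i. a * u0 i + b * u1 i + c * u2 i + d * u3 i)" by blast
next
  assume "\<exists>a b c d. h = (\<lambda>i. a * u0 i + b * u1 i + c * u2 i + d * u3 i)"
  then obtain a b c d where h: "h = (\<lambda>i. a * u0 i + b * u1 i + c * u2 i + d * u3 i)" by blast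
  define e where "e = (\<lambda>k::nat. if k = 0 then a else if k = 1 then b else if k = 2 then c else d)"
  have "h = (\<lambda>i. \<Sum>k<length [u0, u1, u2, u3]. e k * ([u0, u1, u2, u3] ! k) i)"
    by (simp add: h e_def numeral_eq_Suc lessThan_Suc algebra_simps)
  then show "h \<in> lspan [u0, u1, u2, u3]" unfolding lspan_def by blast
qed

lemma lspan_pair_left: "f \<in> lspan [f, g]"
  unfolding lspan_pair_iff by (rule exI[of _ 1], rule exI[of _ 0]) simp

lemma lspan_pair_right: "g \<in> lspan [f, g]"
  unfolding lspan_pair_iff by (rule exI[of _ 0], rule exI[of _ 1]) simp

lemma lspan_pair_lincomb:
  assumes "v \<in> lspan [f, g]" "w \<in> lspan [f, g]"
  shows "(\<lambda>i. a * v i + b * w i) \<in> lspan [f, g]"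
proof -
  obtain a1 b1 a2 b2 where "v = (\<lambda>i. a1 * f i + b1 * g i)" "w = (\<lambda>i. a2 * f i + b2 * g i)"
    using assms unfolding lspan_pair_iff by blast
  then have "(\<lambda>i. a * v i + b * w i) = (\<lambda>i. (a*a1 + b*a2) * f i + (a*b1 + b*b2) * g i)"
    by (simp add: fun_eq_iff algebra_simps)
  then show ?thesis unfolding lspan_pair_iff by blast
qed

lemma lspan_pair_smult: "v \<in> lspan [f, g] \<Longrightarrow> (\<lambda>i. c * v i) \<in> lspan [f, g]"
  using lspan_pair_lincomb[of v f g v c 0] by simp

lemma lspan_four_lincomb:
  assumes "v \<in> lspan [u0, u1, u2, u3]" "w \<in> lspan [u0, u1, u2, u3]"
  shows "(\<lambda>i. a * v i + b * w i) \<in> lspan [u0, u1, u2, u3]"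
proof -
  obtain a1 b1 c1 d1 a2 b2 c2 d2 where
    "v = (\<lambda>i. a1 * u0 i + b1 * u1 i + c1 * u2 i + d1 * u3 i)"
    "w = (\<lambda>i. a2 * u0 i + b2 * u1 i + c2 * u2 i + d2 * u3 i)"
    using assms unfolding lspan_four_iff by blast
  then have "(\<lambda>i. a * v i + b * w i) = (\<lambda>i. (a*a1 + b*a2) * u0 i + (a*b1 + b*b2) * u1 i
      + (a*c1 + b*c2) * u2 i + (a*d1 + b*d2) * u3 i)"
    by (simp add: fun_eq_iff algebra_simps)
  then show ?thesis unfolding lspan_four_iff by blast
qed

lemma lspan_pair_subset:
  assumes "v \<in> lspan [f, g]" "w \<in> lspan [f, g]" shows "lspan [v, w] \<subseteq> lspan [f, g]"
proof
  fix h assume "h \<in> lspan [v, w]"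
  then obtain a b where "h = (\<lambda>i. a * v i + b * w i)" unfolding lspan_pair_iff by blast
  then show "h \<in> lspan [f, g]" using lspan_pair_lincomb[OF assms] by simp
qed

lemma lindep_free_pair_iff: "lindep_free [f, g] \<longleftrightarrow>
   (\<forall>a b. (\<lambda>i. a * f i + b * g i) = (\<lambda>i. 0) \<longrightarrow> a = 0 \<and> b = 0)"
proof
  assume L: "lindep_free [f, g]"
  show "\<forall>a b. (\<lambda>i. a * f i + b * g i) = (\<lambda>i. 0) \<longrightarrow> a = 0 \<and> b = 0"
  proof (intro allI impI)
    fix a b assume z: "(\<lambda>i. a * f i + b * g i) = (\<lambda>i. 0)"
    define c where "c = (\<lambda>k::nat. if k = 0 then a else b)"
    have "(\<lambda>i. \<Sum>k<length [f,g]. c k * ([f, g] ! k) i) = (\<lambda>i. 0)"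
      using z by (simp add: c_def numeral_eq_Suc lessThan_Suc fun_eq_iff algebra_simps)
    then have "c 0 = 0" "c 1 = 0" using L unfolding lindep_free_def by simp_all
    then show "a = 0 \<and> b = 0" unfolding c_def by auto
  qed
next
  assume R: "\<forall>a b. (\<lambda>i. a * f i + b * g i) = (\<lambda>i. 0) \<longrightarrow> a = 0 \<and> b = 0"
  show "lindep_free [f, g]" unfolding lindep_free_def
  proof (intro allI impI)
    fix c k assume "(\<lambda>i. \<Sum>k<length [f, g]. c k * ([f, g] ! k) i) = (\<lambda>i. 0)"
      and k: "k < length [f,g]"
    then have "(\<lambda>i. c 0 * f i + c 1 * g i) = (\<lambda>i. 0)"
      by (simp add: numeral_eq_Suc lessThan_Suc add.commute)
    then show "c k = 0" using R k by (auto simp: less_Suc_eq)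
  qed
qed

lemma lindep_free_pair_nonzero:
  assumes "lindep_free [f, g]" shows "f \<noteq> (\<lambda>i. 0)"
  using assms[unfolded lindep_free_pair_iff, rule_format, of 1 0] by auto

lemma lindep_free_pair_if_minor:
  assumes "f i * g j - f j * g i \<noteq> 0" shows "lindep_free [f, g]"
  unfolding lindep_free_pair_iff
proof (intro allI impI)
  fix a b assume "(\<lambda>l. a * f l + b * g l) = (\<lambda>l. 0)"
  then have z: "a * f i + b * g i = 0" "a * f j + b * g j = 0" by (auto simp: fun_eq_iff)
  have "a * (f i * g j - f j * g i) = (a * f i + b * g i) * g j - (a * f j + b * g j) * g i"
    "b * (f i * g j - f j * g i) = (a * f j + b * g j) * f i - (a * f i + b * g i) * f j"
    by (simp_all add: algebra_simps)
  then show "a = 0 \<and> b = 0" using z assms by simp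
qed

lemma pluecker_nonzero_if_lindep_free:
  assumes "lindep_free [f, g]" shows "\<exists>j k. pluecker f g (j, k) \<noteq> 0"
proof (rule ccontr)
  assume "\<not> ?thesis"
  then have z: "\<And>j k. f j * g k = f k * g j" by (auto simp: pluecker_def)
  obtain j where fj: "f j \<noteq> 0" using lindep_free_pair_nonzero[OF assms] by auto
  have "(\<lambda>i. g j * f i + (- f j) * g i) = (\<lambda>i. 0)"
    using z by (auto simp: fun_eq_iff algebra_simps)
  then have "g j = 0 \<and> - f j = 0" using assms[unfolded lindep_free_pair_iff, rule_format] by blast
  then show False using fj by simp
qed

lemma lspan_pair_eq:
  assumes ind: "lindep_free [v, w]" and v: "v \<in> lspan [f, g]" and w: "w \<in> lspan [f, g]"
  shows "lspan [v, w] = lspan [f, g]"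
proof
  show "lspan [v, w] \<subseteq> lspan [f, g]" using lspan_pair_subset[OF v w] .
  obtain a b where va: "v = (\<lambda>i. a * f i + b * g i)" using v lspan_pair_iff by blast
  obtain c e where wc: "w = (\<lambda>i. c * f i + e * g i)" using w lspan_pair_iff by blast
  define D where "D = a * e - b * c"
  have e1: "(\<lambda>i. e * v i + (- b) * w i) = (\<lambda>i. D * f i)"
   and e2: "(\<lambda>i. (- c) * v i + a * w i) = (\<lambda>i. D * g i)"
    by (simp_all add: va wc D_def fun_eq_iff algebra_simps)
  have D0: "D \<noteq> 0"
  proof
    assume "D = 0"
    then have "(\<lambda>i. e * v i + (- b) * w i) = (\<lambda>i. 0)" "(\<lambda>i. (- c) * v i + a * w i) = (\<lambda>i. 0)"
      using e1 e2 by simp_all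
    then have "e = 0 \<and> - b = 0" "- c = 0 \<and> a = 0"
      using ind[unfolded lindep_free_pair_iff, rule_format] by blast+
    then show False using lindep_free_pair_nonzero[OF ind] va by simp
  qed
  have "(\<lambda>i. (1 / D) * (e * v i + (- b) * w i)) \<in> lspan [v, w]"
       "(\<lambda>i. (1 / D) * ((- c) * v i + a * w i)) \<in> lspan [v, w]"
    by (intro lspan_pair_smult lspan_pair_lincomb lspan_pair_left lspan_pair_right)+
  then have "f \<in> lspan [v, w]" "g \<in> lspan [v, w]"
    using D0 unfolding e1[unfolded fun_eq_iff, rule_format] e2[unfolded fun_eq_iff, rule_format]
    by simp_all
  then show "lspan [f, g] \<subseteq> lspan [v, w]" by (rule lspan_pair_subset)
qed

lemma pluecker_of_basis:
  assumes "line_basis (lspan [f, g]) f' g'"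
  shows "\<exists>d. d \<noteq> 0 \<and> pluecker f' g' = pluecker (\<lambda>i. d * f i) g"
proof -
  have eq: "lspan [f', g'] = lspan [f, g]" and ind: "lindep_free [f', g']"
    using assms by (auto simp: line_basis_def)
  obtain a b where fa: "f' = (\<lambda>i. a * f i + b * g i)"
    using lspan_pair_left[of f' g'] eq lspan_pair_iff by auto
  obtain c e where gc: "g' = (\<lambda>i. c * f i + e * g i)"
    using lspan_pair_right[of g' f'] eq lspan_pair_iff by auto
  have pl: "pluecker f' g' = pluecker (\<lambda>i. (a * e - b * c) * f i) g"
    by (simp add: fa gc pluecker_def fun_eq_iff algebra_simps)
  have "a * e - b * c \<noteq> 0"
    using pluecker_nonzero_if_lindep_free[OF ind] unfolding pl by (auto simp: pluecker_def)
  then show ?thesis using pl by blast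
qed

lemma lspan_pair_smult_left:
  assumes "d \<noteq> 0" shows "lspan [\<lambda>i. d * f i, g] = lspan [f, g]"
proof
  show "lspan [\<lambda>i. d * f i, g] \<subseteq> lspan [f, g]"
    by (intro lspan_pair_subset lspan_pair_smult lspan_pair_left lspan_pair_right)
  have "(\<lambda>i. (1 / d) * (d * f i)) \<in> lspan [\<lambda>i. d * f i, g]"
    by (intro lspan_pair_smult lspan_pair_left)
  then show "lspan [f, g] \<subseteq> lspan [\<lambda>i. d * f i, g]"
    using assms by (intro lspan_pair_subset lspan_pair_right) simp
qed

text \<open>For P = pluecker f g this is the 3 \<times> 3 minor of the rows h, f, g in the columns i, j, k.\<close>
definition incidence :: "bform \<Rightarrow> (nat \<times> nat \<Rightarrow> complex) \<Rightarrow> nat \<Rightarrow> nat \<Rightarrow> nat \<Rightarrow> complex" where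
  "incidence h P i j k = h i * P (j, k) - h j * P (i, k) + h k * P (i, j)"

lemma incidence_eq_0_if_in_lspan:
  assumes "a \<in> lspan [f, g]" "b \<in> lspan [f, g]" "h \<in> lspan [f, g]"
  shows "incidence h (pluecker a b) i j k = 0"
proof -
  obtain a1 a2 where "a = (\<lambda>i. a1 * f i + a2 * g i)" using assms(1) lspan_pair_iff by blast
  moreover obtain b1 b2 where "b = (\<lambda>i. b1 * f i + b2 * g i)" using assms(2) lspan_pair_iff by blast
  moreover obtain h1 h2 where "h = (\<lambda>i. h1 * f i + h2 * g i)" using assms(3) lspan_pair_iff by blast
  ultimately show ?thesis by (simp add: incidence_def pluecker_def algebra_simps)
qed

lemma in_lspan_if_incidence_eq_0:
  assumes P: "pluecker f g (j, k) \<noteq> 0" and I: "\<And>i. incidence h (pluecker f g) i j k = 0"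
  shows "h \<in> lspan [f, g]"
proof -
  define D where "D = f j * g k - f k * g j"
  have D0: "D \<noteq> 0" using P by (simp add: D_def pluecker_def)
  have "h i = ((h j * g k - h k * g j) / D) * f i + ((h k * f j - h j * f k) / D) * g i" for i
  proof -
    have e: "h i * D = f i * (h j * g k - h k * g j) + g i * (h k * f j - h j * f k)"
      using I[of i] by (simp add: incidence_def pluecker_def D_def algebra_simps)
    have "h i = (h i * D) / D" using D0 by simp
    also have "\<dots> = (f i * (h j * g k - h k * g j) + g i * (h k * f j - h j * f k)) / D"
      using e by simp
    also have "\<dots> = ((h j * g k - h k * g j) / D) * f i + ((h k * f j - h j * f k) / D) * g i"
      by (simp add: add_divide_distrib[symmetric] algebra_simps)
    finally show ?thesis .
  qed
  then show ?thesis unfolding lspan_pair_iff by blast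
qed

lemma pluecker_column_in_lspan: "(\<lambda>l. pluecker f g (m, l)) \<in> lspan [f, g]"
proof -
  have "(\<lambda>l. pluecker f g (m, l)) = (\<lambda>l. (- g m) * f l + f m * g l)"
    by (simp add: pluecker_def fun_eq_iff algebra_simps)
  then show ?thesis unfolding lspan_pair_iff by blast
qed

lemma lspan_pluecker_columns:
  assumes "lindep_free [f, g]"
  obtains j k where "pluecker f g (j, k) \<noteq> 0"
    and "lspan [\<lambda>l. pluecker f g (j, l), \<lambda>l. pluecker f g (k, l)] = lspan [f, g]"
proof -
  obtain j k where jk: "pluecker f g (j, k) \<noteq> 0"
    using pluecker_nonzero_if_lindep_free[OF assms] by blast
  have "pluecker f g (j, k) * pluecker f g (k, j) - pluecker f g (j, j) * pluecker f g (k, k)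
      = - (pluecker f g (j, k) * pluecker f g (j, k))"
    by (simp add: pluecker_def algebra_simps)
  then have "lindep_free [\<lambda>l. pluecker f g (j, l), \<lambda>l. pluecker f g (k, l)]"
    using jk by (intro lindep_free_pair_if_minor[of _ k _ j]) simp
  from that[OF jk lspan_pair_eq[OF this pluecker_column_in_lspan pluecker_column_in_lspan]]
  show ?thesis .
qed

section \<open>The Hessian of a binary quartic\<close>

lemma quartics_lincomb:
  "f \<in> quartics \<Longrightarrow> g \<in> quartics \<Longrightarrow> (\<lambda>i. a * f i + b * g i) \<in> quartics"
  by (simp add: quartics_def)

lemma quartics_add: "f \<in> quartics \<Longrightarrow> g \<in> quartics \<Longrightarrow> (\<lambda>i. f i + g i) \<in> quartics"
  by (simp add: quartics_def)

definition hess4 :: "bform \<Rightarrow> bform" where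
  "hess4 c = (\<lambda>k. if k = 0 then 24*c 0*c 2 - 9*c 1*c 1
     else if k = 1 then 72*c 0*c 3 - 12*c 1*c 2
     else if k = 2 then 144*c 0*c 4 + 18*c 1*c 3 - 12*c 2*c 2
     else if k = 3 then 72*c 1*c 4 - 12*c 2*c 3
     else if k = 4 then 24*c 2*c 4 - 9*c 3*c 3 else 0)"

lemma hess_eq_hess4:
  assumes "c \<in> quartics" shows "hess c = hess4 c"
proof
  fix k
  have z: "\<And>i. 4 < i \<Longrightarrow> c i = 0" using assms by (simp add: quartics_def)
  show "hess c k = hess4 c k"
  proof (cases "k \<le> 4")
    case True
    then have "k = 0 \<or> k = 1 \<or> k = 2 \<or> k = 3 \<or> k = 4" by auto
    then show ?thesis
      by (elim disjE; simp add: hess_def hess4_def fmul_def dX_def dY_def z numeral_eq_Suc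
          atMost_Suc algebra_simps)
  next
    case False
    have "dX 3 (dX 4 c) i = 0 \<or> dY (dY c) (k - i) = 0" "dY (dX 4 c) i = 0 \<or> dY (dX 4 c) (k - i) = 0" for i
      using False by (cases "i \<le> 2"; simp add: dX_def dY_def z)+
    then have "fmul (dX 3 (dX 4 c)) (dY (dY c)) k = 0" "fmul (dY (dX 4 c)) (dY (dX 4 c)) k = 0"
      unfolding fmul_def by (auto intro!: sum.neutral)
    then show ?thesis using False by (simp add: hess_def hess4_def)
  qed
qed

lemma hess_in_quartics: "f \<in> quartics \<Longrightarrow> hess f \<in> quartics"
  by (simp add: hess_eq_hess4 hess4_def quartics_def)

lemma hess4_polarize: "hess4 (\<lambda>i. a * v i + b * w i) k =
   a*a * hess4 v k + a*b * (hess4 (\<lambda>i. v i + w i) k - hess4 v k - hess4 w k) + b*b * hess4 w k"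
  by (simp add: hess4_def; simp add: algebra_simps)

lemma hess_lincomb_polarize:
  assumes "u0 \<in> quartics" "u1 \<in> quartics"
  shows "hess (\<lambda>i. a * u0 i + b * u1 i) = (\<lambda>i. a*a * hess u0 i
     + a*b * (hess (\<lambda>i. u0 i + u1 i) i - hess u0 i - hess u1 i) + b*b * hess u1 i)"
  using quartics_lincomb[OF assms, of a b] quartics_add[OF assms]
  by (simp add: hess_eq_hess4 assms fun_eq_iff hess4_polarize)

lemma hess_smult: "f \<in> quartics \<Longrightarrow> hess (\<lambda>i. c * f i) = (\<lambda>i. c*c * hess f i)"
  using quartics_lincomb[of f f c 0]
  by (simp add: hess_eq_hess4 fun_eq_iff; simp add: hess4_def algebra_simps)

definition inv_I :: "bform \<Rightarrow> complex" where
  "inv_I f = 1728 * f 0 * f 4 - 432 * f 1 * f 3 + 144 * f 2 * f 2"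

definition inv_J :: "bform \<Rightarrow> complex" where
  "inv_J f = 124416 * f 0 * f 2 * f 4 - 46656 * f 0 * f 3 * f 3 - 46656 * f 1 * f 1 * f 4
          + 15552 * f 1 * f 2 * f 3 - 3456 * f 2 * f 2 * f 2"

lemma hess_pencil:
  assumes f: "f \<in> quartics"
  shows "hess (\<lambda>i. a * f i + b * hess f i) =
     (\<lambda>k. (2*a*b*inv_I f + b*b*inv_J f) * f k + (a*a - b*b*inv_I f) * hess f k)"
proof
  fix k
  have "hess4 (\<lambda>i. a * f i + b * hess4 f i) k =
      (2*a*b*inv_I f + b*b*inv_J f) * f k + (a*a - b*b*inv_I f) * hess4 f k"
  proof (cases "k \<le> 4")
    case True
    then have "k = 0 \<or> k = 1 \<or> k = 2 \<or> k = 3 \<or> k = 4" by auto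
    then show ?thesis
      by (elim disjE; simp add: hess4_def inv_I_def inv_J_def; simp add: algebra_simps)
  next
    case False then show ?thesis using f by (simp add: hess4_def quartics_def)
  qed
  then show "hess (\<lambda>i. a * f i + b * hess f i) k =
      (2*a*b*inv_I f + b*b*inv_J f) * f k + (a*a - b*b*inv_I f) * hess f k"
    using quartics_lincomb[OF f hess_in_quartics[OF f]] by (simp add: hess_eq_hess4 f)
qed

lemma hess_closed_pencil:
  assumes "f \<in> quartics" "h \<in> lspan [f, hess f]"
  shows "hess h \<in> lspan [f, hess f]"
proof -
  obtain a b where h: "h = (\<lambda>i. a * f i + b * hess f i)" using assms(2) lspan_pair_iff by blast
  show ?thesis unfolding h hess_pencil[OF assms(1)] lspan_pair_iff by blast
qed

lemma hess_in_lspan_if_hess_double: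
  assumes "v \<in> quartics" "hess (\<lambda>i. v i + v i) \<in> lspan [f, g]"
  shows "hess v \<in> lspan [f, g]"
proof -
  have "hess (\<lambda>i. v i + v i) = hess (\<lambda>i. 2 * v i)" by (simp only: mult_2)
  also have "\<dots> = (\<lambda>i. 4 * hess v i)" using hess_smult[OF assms(1), of 2] by simp
  finally have "(\<lambda>i. 4 * hess v i) \<in> lspan [f, g]" using assms(2) by simp
  from lspan_pair_smult[OF this, of "1 / 4"] show ?thesis by simp
qed

lemma hess_lincomb_in_lspan:
  assumes q: "v \<in> quartics" "w \<in> quartics"
    and h: "hess (\<lambda>i. v i + v i) \<in> lspan [f, g]" "hess (\<lambda>i. w i + w i) \<in> lspan [f, g]"
      "hess (\<lambda>i. v i + w i) \<in> lspan [f, g]"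
  shows "hess (\<lambda>i. a * v i + b * w i) \<in> lspan [f, g]"
proof -
  have hv: "hess v \<in> lspan [f, g]" "hess w \<in> lspan [f, g]"
    using hess_in_lspan_if_hess_double q h(1,2) by blast+
  have cross: "(\<lambda>i. 1 * (1 * hess (\<lambda>i. v i + w i) i + (-1) * hess v i) + (-1) * hess w i)
      \<in> lspan [f, g]"
    by (intro lspan_pair_lincomb h(3) hv)
  have "(\<lambda>i. 1 * ((a*a) * hess v i + (a*b) * (1 * (1 * hess (\<lambda>i. v i + w i) i + (-1) * hess v i)
      + (-1) * hess w i)) + (b*b) * hess w i) \<in> lspan [f, g]"
    by (intro lspan_pair_lincomb hv cross)
  then show ?thesis unfolding hess_lincomb_polarize[OF q] by simp
qed

section \<open>Lines of H3 are closed under the Hessian\<close>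

abbreviation hess_pencil_line :: "bform \<Rightarrow> bform set" where
  "hess_pencil_line f \<equiv> lspan [f, hess f]"

definition simple_root_pencils :: "bform set set" where
  "simple_root_pencils = {hess_pencil_line f | f. f \<in> quartics \<and> four_simple_roots f}"

lemma H3_eq_zclosure: "H3 = zclosure simple_root_pencils"
  by (simp add: H3_def simple_root_pencils_def)

text \<open>Polynomial form of "the Hessian of the sum of the Pluecker columns m and n lies on the line";
  by polarization these conditions for all m, n make the line closed under the Hessian.\<close>
definition hess_column_incidence :: "nat \<Rightarrow> nat \<Rightarrow> nat \<Rightarrow> nat \<Rightarrow> nat \<Rightarrow> (nat \<times> nat \<Rightarrow> complex) \<Rightarrow> complex"
  where "hess_column_incidence m n i j k P = incidence (hess (\<lambda>l. P (m, l) + P (n, l))) P i j k"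

lemma polyfun_hess_column_incidence: "hess_column_incidence m n i j k \<in> polyfun"
proof -
  have "polyvec (\<lambda>P l. P (m, l) + P (n, l))"
    by (simp add: polyvec_def polyfun.padd polyfun.pvar)
  note H = polyvecD[OF polyvec_hess[OF this]]
  show ?thesis unfolding hess_column_incidence_def[abs_def] incidence_def
    by (rule polyfun.padd polyfun_sub polyfun.pmul polyfun.pvar H)+
qed

lemma hess_column_incidence_simple_root_pencils:
  assumes "M \<in> simple_root_pencils" "line_basis M f g"
  shows "hess_column_incidence m n i j k (pluecker f g) = 0"
proof -
  obtain f0 where f0: "f0 \<in> quartics" "M = hess_pencil_line f0"
    using assms(1) by (auto simp: simple_root_pencils_def)
  have M: "M = lspan [f, g]" using assms(2) by (simp add: line_basis_def)
  define w where "w = (\<lambda>l. pluecker f g (m, l) + pluecker f g (n, l))"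
  have "(\<lambda>l. 1 * pluecker f g (m, l) + 1 * pluecker f g (n, l)) \<in> lspan [f, g]"
    by (intro lspan_pair_lincomb pluecker_column_in_lspan)
  then have "w \<in> M" using M by (simp add: w_def)
  then have "hess w \<in> lspan [f, g]" using hess_closed_pencil f0 M by simp
  then show ?thesis unfolding hess_column_incidence_def w_def[symmetric]
    by (rule incidence_eq_0_if_in_lspan[OF lspan_pair_left lspan_pair_right])
qed

lemma hess_mem_if_in_H3:
  assumes L: "L \<in> H3" and B: "line_basis L f g" and h: "h \<in> L"
  shows "hess h \<in> L"
proof -
  have fq: "f \<in> quartics" and gq: "g \<in> quartics" and ind: "lindep_free [f, g]"
    and Lfg: "L = lspan [f, g]"
    using B by (auto simp: line_basis_def)
  define col where "col m = (\<lambda>l. pluecker f g (m, l))" for m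
  have col_q: "col m \<in> quartics" for m
    using fq gq by (simp add: col_def pluecker_def quartics_def)
  obtain j k where jk: "pluecker f g (j, k) \<noteq> 0" and span: "lspan [col j, col k] = L"
    using lspan_pluecker_columns[OF ind] unfolding col_def Lfg by blast
  have "hess_column_incidence m n i j k (pluecker f g) = 0" for m n i
  proof -
    have "\<forall>F\<in>polyfun. (\<forall>M\<in>simple_root_pencils. \<forall>f g. line_basis M f g \<longrightarrow> F (pluecker f g) = 0)
        \<longrightarrow> (\<forall>f g. line_basis L f g \<longrightarrow> F (pluecker f g) = 0)"
      using L by (simp add: H3_eq_zclosure zclosure_def)
    then show ?thesis
      using polyfun_hess_column_incidence hess_column_incidence_simple_root_pencils B by blast
  qed
  then have hess_sum: "hess (\<lambda>l. col m l + col n l) \<in> lspan [f, g]" for m n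
    using jk by (intro in_lspan_if_incidence_eq_0[of f g j k]) (simp_all add: hess_column_incidence_def col_def)
  obtain a b where "h = (\<lambda>i. a * col j i + b * col k i)" using h span lspan_pair_iff by blast
  then show ?thesis
    using hess_lincomb_in_lspan[OF col_q col_q hess_sum hess_sum hess_sum] Lfg by simp
qed

section \<open>Pencils of a quartic and its Hessian lie in H3\<close>

text \<open>The quartic with scalar x 0 and roots [x (j+1) : x (j+5)], j < 4.\<close>
definition root_quartic :: "(nat \<Rightarrow> complex) \<Rightarrow> bform" where
  "root_quartic x = (\<lambda>i. x 0 * fmul (fmul (fmul (linf (x 1) (x 5)) (linf (x 2) (x 6)))
                                         (linf (x 3) (x 7))) (linf (x 4) (x 8)) i)"

lemma linf_eq_coeff: "linf p q = coeff [:q, -p:]"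
proof
  fix i show "linf p q i = coeff [:q, - p:] i"
    by (cases i; cases "i - 1") (auto simp: linf_def coeff_pCons split: nat.splits)
qed

lemma fmul_coeff: "fmul (coeff A) (coeff B) = coeff (A * B)"
  by (simp add: fmul_def coeff_mult fun_eq_iff)

lemma root_quartic_eq_coeff: "root_quartic x =
   coeff (smult (x 0) ([:x 5, -x 1:] * [:x 6, -x 2:] * [:x 7, -x 3:] * [:x 8, -x 4:]))"
  unfolding root_quartic_def linf_eq_coeff fmul_coeff by (rule ext) (simp only: coeff_smult)

lemma root_quartic_in_quartics: "root_quartic x \<in> quartics"
proof -
  have "degree [:a, b:] \<le> 1" for a b :: complex by (simp add: degree_pCons_le)
  then have "degree (smult (x 0) ([:x 5, -x 1:] * [:x 6, -x 2:] * [:x 7, -x 3:] * [:x 8, -x 4:]))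
      \<le> 1 + 1 + 1 + 1"
    by (intro order.trans[OF degree_smult_le] order.trans[OF degree_mult_le] add_mono) auto
  then show ?thesis unfolding root_quartic_eq_coeff quartics_def by (auto intro: coeff_eq_0)
qed

lemma polyvec_root_quartic: "polyvec root_quartic"
  unfolding polyvec_def root_quartic_def
  by (intro allI polyfun.pmul polyfun.pvar polyvecD[OF polyvec_fmul] polyvec_fmul polyvec_linf)

lemma root_quartic_surj:
  assumes fq: "f \<in> quartics" and fz: "f \<noteq> (\<lambda>i. 0)"
  shows "\<exists>x. root_quartic x = f"
proof -
  define P where "P = Poly [f 0, f 1, f 2, f 3, f 4]"
  have cP: "coeff P i = f i" for i
  proof (cases "i \<le> 4")
    case True
    then have "i = 0 \<or> i = 1 \<or> i = 2 \<or> i = 3 \<or> i = 4" by auto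
    then show ?thesis by (auto simp: P_def numeral_eq_Suc)
  next
    case False
    then have "coeff P i = 0" unfolding P_def coeff_Poly_eq nth_default_def by simp
    then show ?thesis using fq False by (simp add: quartics_def)
  qed
  have dP: "degree P \<le> 4" using cP fq by (intro degree_le) (simp add: quartics_def)
  obtain root where R: "smult (lead_coeff P) (\<Prod>i<degree P. [:-root i, 1:]) = P"
    using complex_poly_decompose' by blast
  define d where "d = degree P"
  define L where "L j = (if j < d then [:-root j, 1:] else 1)" for j
  have "(\<Prod>j<4. L j) = (\<Prod>j\<in>{..<4} \<inter> {j. j < d}. [:-root j, 1:])"
    unfolding L_def by (simp add: prod.If_cases)
  also have "{..<4} \<inter> {j. j < d} = {..<d}" using dP d_def by auto
  finally have Lprod: "(\<Prod>j<4. L j) = (\<Prod>j<d. [:-root j, 1:])" .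
  txt \<open>Roots missing because degree P < 4 are placed at [0 : 1], whose linear form is the
    constant polynomial 1.\<close>
  define x where "x n = (if n = 0 then lead_coeff P
     else if n \<le> 4 then (if n - 1 < d then -1 else 0)
     else if n - 5 < d then - root (n - 5) else 1)" for n
  have Lx: "[:x (j + 5), - x (j + 1):] = L j" if "j < 4" for j
    using that by (auto simp: x_def L_def one_pCons)
  have "root_quartic x = coeff (smult (lead_coeff P) (L 0 * L 1 * L 2 * L 3))"
    unfolding root_quartic_eq_coeff using Lx[of 0] Lx[of 1] Lx[of 2] Lx[of 3] by (simp add: x_def)
  also have "L 0 * L 1 * L 2 * L 3 = (\<Prod>j<4. L j)"
    by (simp add: numeral_eq_Suc lessThan_Suc mult_ac)
  finally show ?thesis using Lprod R cP d_def by (metis ext)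
qed

definition root_genericity :: "(nat \<Rightarrow> complex) \<Rightarrow> complex" where
  "root_genericity x = x 0 * ((x 1 * x 6 - x 2 * x 5) * (x 1 * x 7 - x 3 * x 5) * (x 1 * x 8 - x 4 * x 5)
     * (x 2 * x 7 - x 3 * x 6) * (x 2 * x 8 - x 4 * x 6) * (x 3 * x 8 - x 4 * x 7))
     * (root_quartic x 1 * hess (root_quartic x) 0 - root_quartic x 0 * hess (root_quartic x) 1)"

lemma polyfun_root_genericity: "root_genericity \<in> polyfun"
proof -
  note R = polyvecD[OF polyvec_root_quartic] polyvecD[OF polyvec_hess[OF polyvec_root_quartic]]
  show ?thesis unfolding root_genericity_def
    by (intro polyfun.pmul polyfun_sub polyfun.pvar R)
qed

lemma four_simple_roots_if_root_genericity:
  assumes "root_genericity x \<noteq> 0" shows "four_simple_roots (root_quartic x)"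
proof -
  define p where "p j = [x 1, x 2, x 3, x 4] ! j" for j
  define q where "q j = [x 5, x 6, x 7, x 8] ! j" for j
  have nz: "x 0 \<noteq> 0" "x 1 * x 6 - x 2 * x 5 \<noteq> 0" "x 1 * x 7 - x 3 * x 5 \<noteq> 0"
    "x 1 * x 8 - x 4 * x 5 \<noteq> 0" "x 2 * x 7 - x 3 * x 6 \<noteq> 0" "x 2 * x 8 - x 4 * x 6 \<noteq> 0"
    "x 3 * x 8 - x 4 * x 7 \<noteq> 0"
    using assms by (auto simp: root_genericity_def)
  have distinct: "\<forall>j<4. \<forall>k<4. j \<noteq> k \<longrightarrow> p j * q k \<noteq> p k * q j"
  proof (intro allI impI)
    fix j k :: nat assume "j < 4" "k < 4" "j \<noteq> k"
    then have "(j = 0 \<or> j = 1 \<or> j = 2 \<or> j = 3) \<and> (k = 0 \<or> k = 1 \<or> k = 2 \<or> k = 3)" by auto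
    then show "p j * q k \<noteq> p k * q j" using nz \<open>j \<noteq> k\<close>
      by (elim conjE disjE) (simp_all add: p_def q_def algebra_simps)
  qed
  have "p j \<noteq> 0 \<or> q j \<noteq> 0" if j: "j < 4" for j
  proof -
    have "\<exists>k::nat. k < 4 \<and> k \<noteq> j"
      by (cases "j = 0") (rule exI[of _ 1], simp, rule exI[of _ 0], simp)
    then show ?thesis using distinct j by fastforce
  qed
  moreover have "root_quartic x = (\<lambda>i. x 0 * fmul (fmul (fmul (linf (p 0) (q 0)) (linf (p 1) (q 1)))
                                   (linf (p 2) (q 2))) (linf (p 3) (q 3)) i)"
    by (simp add: root_quartic_def p_def q_def)
  ultimately show ?thesis unfolding four_simple_roots_def using nz(1) distinct by blast
qed

text \<open>x^3 y - x y^3, with roots [0 : 1], [1 : 0], [1 : 1], [-1 : 1].\<close>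
definition sample_quartic :: bform where
  "sample_quartic = (\<lambda>i. if i = 1 then 1 else if i = 3 then -1 else 0)"

definition sample_roots :: "nat \<Rightarrow> complex" where
  "sample_roots n = (if n = 0 then 1 else if n = 2 then -1 else if n = 3 then 1 else if n = 4 then -1
     else if n = 5 then 1 else if n = 7 then 1 else if n = 8 then 1 else 0)"

lemma sample_quartic_in_quartics: "sample_quartic \<in> quartics"
  by (simp add: sample_quartic_def quartics_def)

lemma hess_sample_quartic: "hess sample_quartic 0 = -9" "hess sample_quartic 1 = 0"
  unfolding hess_eq_hess4[OF sample_quartic_in_quartics] by (simp_all add: hess4_def sample_quartic_def)

lemma root_quartic_sample_roots: "root_quartic sample_roots = sample_quartic"
proof -
  have "smult (sample_roots 0) ([:sample_roots 5, -sample_roots 1:] * [:sample_roots 6, -sample_roots 2:]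
      * [:sample_roots 7, -sample_roots 3:] * [:sample_roots 8, -sample_roots 4:]) = [:0, 1, 0, -1:]"
    by (simp add: sample_roots_def)
  then show ?thesis unfolding root_quartic_eq_coeff
    by (auto simp: sample_quartic_def fun_eq_iff coeff_pCons split: nat.splits)
qed

lemma root_genericity_sample_roots: "root_genericity sample_roots \<noteq> 0"
  unfolding root_genericity_def root_quartic_sample_roots hess_sample_quartic
  by (simp add: sample_quartic_def sample_roots_def)

lemma polyfun_vanishes_on_hess_pencils:
  assumes F: "F \<in> polyfun"
    and FS: "\<forall>M\<in>simple_root_pencils. \<forall>f g. line_basis M f g \<longrightarrow> F (pluecker f g) = 0"
    and fq: "f \<in> quartics" and fz: "f \<noteq> (\<lambda>i. 0)" and d: "d \<noteq> 0"
  shows "F (pluecker (\<lambda>i. d * f i) (hess f)) = 0"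
proof -
  obtain x0 where x0: "root_quartic x0 = f" using root_quartic_surj[OF fq fz] by blast
  define G where "G x = F (pluecker (\<lambda>i. d * root_quartic x i) (hess (root_quartic x)))" for x
  have "G \<in> polyfun" unfolding G_def
    by (intro polyfun_compose[OF F] polyfun_pluecker polyvec_smult polyvec_hess polyvec_root_quartic)
  moreover have "G x = 0" if generic: "root_genericity x \<noteq> 0" for x
  proof -
    let ?f = "root_quartic x"
    have fx: "?f \<in> quartics" by (rule root_quartic_in_quartics)
    have "(d * ?f 1) * hess ?f 0 - (d * ?f 0) * hess ?f 1 = d * (?f 1 * hess ?f 0 - ?f 0 * hess ?f 1)"
      by (simp add: algebra_simps)
    then have "lindep_free [\<lambda>i. d * ?f i, hess ?f]"
      using generic d by (intro lindep_free_pair_if_minor) (auto simp: root_genericity_def)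
    then have "line_basis (hess_pencil_line ?f) (\<lambda>i. d * ?f i) (hess ?f)"
      unfolding line_basis_def using lspan_pair_smult_left[OF d] fx hess_in_quartics[OF fx]
      by (simp add: quartics_def)
    moreover have "hess_pencil_line ?f \<in> simple_root_pencils"
      unfolding simple_root_pencils_def using fx four_simple_roots_if_root_genericity[OF generic] by blast
    ultimately show ?thesis using FS unfolding G_def by blast
  qed
  ultimately have "G x0 = 0"
    by (rule polyfun_eq_0_by_density[OF _ polyfun_root_genericity _ root_genericity_sample_roots])
  then show ?thesis using x0 G_def by simp
qed

lemma hess_pencil_in_H3:
  assumes fq: "f \<in> quartics" and ind: "lindep_free [f, hess f]"
  shows "hess_pencil_line f \<in> H3"
proof -
  have "line_basis (hess_pencil_line f) f (hess f)"
    using fq hess_in_quartics[OF fq] ind by (simp add: line_basis_def)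
  then have "hess_pencil_line f \<in> G14" by (auto simp: G14_def)
  moreover have "F (pluecker f' g') = 0"
    if "F \<in> polyfun" "\<forall>M\<in>simple_root_pencils. \<forall>f g. line_basis M f g \<longrightarrow> F (pluecker f g) = 0"
      and "line_basis (hess_pencil_line f) f' g'" for F f' g'
    using pluecker_of_basis[OF that(3)] polyfun_vanishes_on_hess_pencils[OF that(1,2) fq]
      lindep_free_pair_nonzero[OF ind] by auto
  ultimately show ?thesis unfolding H3_eq_zclosure zclosure_def by blast
qed

section \<open>Lines of H3 through a general point\<close>

lemma H3_Int_Omega04:
  assumes pq: "p \<in> quartics" and ind: "lindep_free [p, hess p]"
  shows "H3 \<inter> Omega04 p = {hess_pencil_line p}"
proof
  have "hess_pencil_line p \<in> G14"
    using pq hess_in_quartics[OF pq] ind by (auto simp: G14_def line_basis_def)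
  then show "{hess_pencil_line p} \<subseteq> H3 \<inter> Omega04 p"
    using hess_pencil_in_H3[OF pq ind] lspan_pair_left by (simp add: Omega04_def)
  show "H3 \<inter> Omega04 p \<subseteq> {hess_pencil_line p}"
  proof
    fix L assume L: "L \<in> H3 \<inter> Omega04 p"
    then obtain f g where B: "line_basis L f g" and pL: "p \<in> L"
      by (auto simp: Omega04_def G14_def)
    have "hess p \<in> L" using hess_mem_if_in_H3[of L f g p] L B pL by simp
    then show "L \<in> {hess_pencil_line p}"
      using lspan_pair_eq[OF ind] pL B by (simp add: line_basis_def)
  qed
qed

lemma general_Omega04_meets_H3_once:
  "\<exists>F \<in> polyfun. (\<exists>p \<in> quartics. F p \<noteq> 0) \<and>
     (\<forall>p \<in> quartics. p \<noteq> (\<lambda>i. 0) \<and> F p \<noteq> 0 \<longrightarrow> card (H3 \<inter> Omega04 p) = 1)"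
proof (intro bexI[of _ "\<lambda>p. p 1 * hess p 0 - p 0 * hess p 1"] conjI ballI impI)
  show "(\<lambda>p. p 1 * hess p 0 - p 0 * hess p 1) \<in> polyfun"
    using polyvecD[OF polyvec_hess[OF polyvec_id]]
    by (intro polyfun_sub polyfun.pmul polyfun.pvar)
  show "\<exists>p \<in> quartics. p 1 * hess p 0 - p 0 * hess p 1 \<noteq> 0"
    using sample_quartic_in_quartics hess_sample_quartic
    by (intro bexI[of _ sample_quartic]) (simp_all add: sample_quartic_def)
  fix p assume p: "p \<in> quartics" "p \<noteq> (\<lambda>i. 0) \<and> p 1 * hess p 0 - p 0 * hess p 1 \<noteq> 0"
  then have "lindep_free [p, hess p]" by (intro lindep_free_pair_if_minor[of p 1 "hess p" 0]) simp
  then show "card (H3 \<inter> Omega04 p) = 1" using H3_Int_Omega04[OF p(1)] by simp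
qed

section \<open>Lines of H3 in a general \<Omega>(1,3)\<close>

definition minor2 :: "bform \<Rightarrow> bform \<Rightarrow> nat \<Rightarrow> nat \<Rightarrow> complex" where
  "minor2 a b i j = a i * b j - a j * b i"

definition minor3 :: "bform \<Rightarrow> bform \<Rightarrow> bform \<Rightarrow> nat \<Rightarrow> nat \<Rightarrow> nat \<Rightarrow> complex" where
  "minor3 a b c i j k = a i * minor2 b c j k - a j * minor2 b c i k + a k * minor2 b c i j"

definition det4 :: "bform \<Rightarrow> bform \<Rightarrow> bform \<Rightarrow> bform \<Rightarrow> complex" where
  "det4 a b c e = a 0 * minor3 b c e 1 2 3 - a 1 * minor3 b c e 0 2 3
     + a 2 * minor3 b c e 0 1 3 - a 3 * minor3 b c e 0 1 2"

text \<open>Cramer's rule applied to the coefficients 0..3 of w: the residual vanishes in those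
  coordinates, so in coordinate 4 it tests whether w lies in the span of u0, \<dots>, u3.\<close>
definition cramer_residual :: "bform \<Rightarrow> bform \<Rightarrow> bform \<Rightarrow> bform \<Rightarrow> bform \<Rightarrow> nat \<Rightarrow> complex" where
  "cramer_residual u0 u1 u2 u3 w i = det4 u0 u1 u2 u3 * w i - (det4 w u1 u2 u3 * u0 i
     + det4 u0 w u2 u3 * u1 i + det4 u0 u1 w u3 * u2 i + det4 u0 u1 u2 w * u3 i)"

lemma cramer_residual_less_4: "i < 4 \<Longrightarrow> cramer_residual u0 u1 u2 u3 w i = 0"
proof -
  assume "i < 4"
  then have "i = 0 \<or> i = 1 \<or> i = 2 \<or> i = 3" by auto
  then show ?thesis
    by (elim disjE; simp add: cramer_residual_def det4_def minor3_def minor2_def; simp add: algebra_simps)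
qed

lemma cramer_residual_add: "cramer_residual u0 u1 u2 u3 (\<lambda>i. v i + w i) k
   = cramer_residual u0 u1 u2 u3 v k + cramer_residual u0 u1 u2 u3 w k"
  by (simp add: cramer_residual_def det4_def minor3_def minor2_def algebra_simps)

lemma cramer_residual_diff: "cramer_residual u0 u1 u2 u3 (\<lambda>i. v i - w i) k
   = cramer_residual u0 u1 u2 u3 v k - cramer_residual u0 u1 u2 u3 w k"
  by (simp add: cramer_residual_def det4_def minor3_def minor2_def algebra_simps)

lemma cramer_residual_smult:
  "cramer_residual u0 u1 u2 u3 (\<lambda>i. c * v i) k = c * cramer_residual u0 u1 u2 u3 v k"
  by (simp add: cramer_residual_def det4_def minor3_def minor2_def algebra_simps)

lemma cramer_residual_frame:
  "cramer_residual u0 u1 u2 u3 u0 k = 0" "cramer_residual u0 u1 u2 u3 u1 k = 0"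
  "cramer_residual u0 u1 u2 u3 u2 k = 0" "cramer_residual u0 u1 u2 u3 u3 k = 0"
  by (simp_all add: cramer_residual_def det4_def minor3_def minor2_def algebra_simps)

lemma cramer_residual_eq_0_if_in_lspan:
  "w \<in> lspan [u0, u1, u2, u3] \<Longrightarrow> cramer_residual u0 u1 u2 u3 w k = 0"
  unfolding lspan_four_iff
  by (auto simp: cramer_residual_add cramer_residual_smult cramer_residual_frame)

lemma in_lspan_if_cramer_residual_eq_0:
  assumes q: "u0 \<in> quartics" "u1 \<in> quartics" "u2 \<in> quartics" "u3 \<in> quartics" "w \<in> quartics"
    and N: "det4 u0 u1 u2 u3 \<noteq> 0" and X: "cramer_residual u0 u1 u2 u3 w 4 = 0"
  shows "w \<in> lspan [u0, u1, u2, u3]"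
proof -
  let ?N = "det4 u0 u1 u2 u3"
  have "w i = (det4 w u1 u2 u3 / ?N) * u0 i + (det4 u0 w u2 u3 / ?N) * u1 i
      + (det4 u0 u1 w u3 / ?N) * u2 i + (det4 u0 u1 u2 w / ?N) * u3 i" for i
  proof (cases "i \<le> 4")
    case True
    then have "cramer_residual u0 u1 u2 u3 w i = 0"
      using X cramer_residual_less_4 by (cases "i = 4") auto
    then show ?thesis using N by (simp add: cramer_residual_def field_simps)
  next
    case False then show ?thesis using q by (simp add: quartics_def)
  qed
  then show ?thesis unfolding lspan_four_iff by blast
qed

text \<open>The residual of H(a u0 + b u1) is the binary quadratic form quadA a^2 + quadB a b + quadC b^2
  whose zeros are the points v of the line spanned by u0, u1 with H(v) in the span of u0, \<dots>, u3.\<close>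
definition quadA :: "bform \<Rightarrow> bform \<Rightarrow> bform \<Rightarrow> bform \<Rightarrow> complex" where
  "quadA u0 u1 u2 u3 = cramer_residual u0 u1 u2 u3 (hess u0) 4"

definition quadC :: "bform \<Rightarrow> bform \<Rightarrow> bform \<Rightarrow> bform \<Rightarrow> complex" where
  "quadC u0 u1 u2 u3 = cramer_residual u0 u1 u2 u3 (hess u1) 4"

definition quadB :: "bform \<Rightarrow> bform \<Rightarrow> bform \<Rightarrow> bform \<Rightarrow> complex" where
  "quadB u0 u1 u2 u3 = cramer_residual u0 u1 u2 u3 (hess (\<lambda>i. u0 i + u1 i)) 4
     - quadA u0 u1 u2 u3 - quadC u0 u1 u2 u3"

lemma cramer_residual_hess_lincomb:
  assumes "u0 \<in> quartics" "u1 \<in> quartics"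
  shows "cramer_residual u0 u1 u2 u3 (hess (\<lambda>i. a * u0 i + b * u1 i)) 4 =
     quadA u0 u1 u2 u3 * a * a + quadB u0 u1 u2 u3 * a * b + quadC u0 u1 u2 u3 * b * b"
  unfolding hess_lincomb_polarize[OF assms] quadA_def quadB_def quadC_def
  by (simp add: cramer_residual_add cramer_residual_diff cramer_residual_smult algebra_simps)

definition minor01 :: "bform \<Rightarrow> bform \<Rightarrow> complex" where
  "minor01 a b = a 0 * b 1 - a 1 * b 0"

definition hess_cross :: "bform \<Rightarrow> bform \<Rightarrow> bform" where
  "hess_cross u0 u1 = (\<lambda>i. hess (\<lambda>l. u0 l + u1 l) i - hess u0 i - hess u1 i)"

definition cubic3 :: "bform \<Rightarrow> bform \<Rightarrow> complex" where
  "cubic3 u0 u1 = minor01 u0 (hess u0)"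

definition cubic2 :: "bform \<Rightarrow> bform \<Rightarrow> complex" where
  "cubic2 u0 u1 = minor01 u0 (hess_cross u0 u1) + minor01 u1 (hess u0)"

definition cubic1 :: "bform \<Rightarrow> bform \<Rightarrow> complex" where
  "cubic1 u0 u1 = minor01 u0 (hess u1) + minor01 u1 (hess_cross u0 u1)"

definition cubic0 :: "bform \<Rightarrow> bform \<Rightarrow> complex" where
  "cubic0 u0 u1 = minor01 u1 (hess u1)"

lemma minor01_hess_affine:
  assumes "u0 \<in> quartics" "u1 \<in> quartics"
  shows "minor01 (\<lambda>i. s * u0 i + u1 i) (hess (\<lambda>i. s * u0 i + u1 i)) =
     cubic3 u0 u1 * s^3 + cubic2 u0 u1 * s^2 + cubic1 u0 u1 * s + cubic0 u0 u1"
  using hess_lincomb_polarize[OF assms, of s 1]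
  by (simp add: minor01_def cubic3_def cubic2_def cubic1_def cubic0_def hess_cross_def
      power2_eq_square power3_eq_cube algebra_simps)

text \<open>Dividing quadA^2 times the cubic by the quadratic leaves the linear remainder
  rem1 s + rem0, and quad_cubic_res is the quadratic form evaluated at (-rem0, rem1); so
  quad_cubic_res \<noteq> 0 excludes a common root of the cubic and the quadratic.\<close>
definition rem1 :: "bform \<Rightarrow> bform \<Rightarrow> bform \<Rightarrow> bform \<Rightarrow> complex" where
  "rem1 u0 u1 u2 u3 = cubic3 u0 u1 * ((quadB u0 u1 u2 u3)^2 - quadA u0 u1 u2 u3 * quadC u0 u1 u2 u3)
   - cubic2 u0 u1 * quadA u0 u1 u2 u3 * quadB u0 u1 u2 u3 + (quadA u0 u1 u2 u3)^2 * cubic1 u0 u1"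

definition rem0 :: "bform \<Rightarrow> bform \<Rightarrow> bform \<Rightarrow> bform \<Rightarrow> complex" where
  "rem0 u0 u1 u2 u3 = cubic3 u0 u1 * quadB u0 u1 u2 u3 * quadC u0 u1 u2 u3
   - cubic2 u0 u1 * quadA u0 u1 u2 u3 * quadC u0 u1 u2 u3 + (quadA u0 u1 u2 u3)^2 * cubic0 u0 u1"

definition quad_cubic_res :: "bform \<Rightarrow> bform \<Rightarrow> bform \<Rightarrow> bform \<Rightarrow> complex" where
  "quad_cubic_res u0 u1 u2 u3 = (rem1 u0 u1 u2 u3)^2 * quadC u0 u1 u2 u3
   - rem1 u0 u1 u2 u3 * rem0 u0 u1 u2 u3 * quadB u0 u1 u2 u3 + (rem0 u0 u1 u2 u3)^2 * quadA u0 u1 u2 u3"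

lemma cubic_mod_quadratic:
  fixes A B C R3 R2 R1 R0 s :: complex
  shows "A^2 * (R3 * s^3 + R2 * s^2 + R1 * s + R0) =
    (R3 * (B^2 - A * C) - R2 * A * B + A^2 * R1) * s + (R3 * B * C - R2 * A * C + A^2 * R0)
    + (A * s^2 + B * s + C) * (A * R3 * s + A * R2 - B * R3)"
  by (simp add: power2_eq_square power3_eq_cube algebra_simps)

lemma quadratic_two_roots:
  fixes A B C :: complex
  assumes A: "A \<noteq> 0" and D: "B^2 - 4 * A * C \<noteq> 0"
  shows "\<exists>s1 s2. s1 \<noteq> s2 \<and> (\<forall>s. A * s^2 + B * s + C = 0 \<longleftrightarrow> s = s1 \<or> s = s2)"
proof -
  define sq where "sq = csqrt (B^2 - 4 * A * C)"
  have sq2: "sq^2 = B^2 - 4 * A * C" and sq0: "sq \<noteq> 0" using D by (simp_all add: sq_def)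
  define s1 where "s1 = (- B + sq) / (2 * A)"
  define s2 where "s2 = (- B - sq) / (2 * A)"
  have "s1 \<noteq> s2" using sq0 A by (simp add: s1_def s2_def divide_simps)
  moreover have "A * s^2 + B * s + C = A * (s - s1) * (s - s2)" for s
  proof -
    have "4 * A * (A * (s - s1) * (s - s2)) = (2 * A * s + B - sq) * (2 * A * s + B + sq)"
      using A by (simp add: s1_def s2_def field_simps)
    also have "\<dots> = 4 * A * (A * s^2 + B * s + C)"
      using sq2 by (simp add: algebra_simps power2_eq_square)
    finally show ?thesis using A by simp
  qed
  ultimately show ?thesis using A by auto
qed

locale generic_flag =
  fixes u0 u1 u2 u3 :: bform
  assumes quartic: "u0 \<in> quartics" "u1 \<in> quartics" "u2 \<in> quartics" "u3 \<in> quartics"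
    and det4_ne_0: "det4 u0 u1 u2 u3 \<noteq> 0"
    and quadA_ne_0: "quadA u0 u1 u2 u3 \<noteq> 0"
    and discr_ne_0: "(quadB u0 u1 u2 u3)^2 - 4 * quadA u0 u1 u2 u3 * quadC u0 u1 u2 u3 \<noteq> 0"
    and res_ne_0: "quad_cubic_res u0 u1 u2 u3 \<noteq> 0"
    and hess_u0_off_line: "incidence (hess u0) (pluecker u0 u1) 0 1 2 \<noteq> 0"
begin

definition flag_root :: "complex \<Rightarrow> bool" where
  "flag_root s \<longleftrightarrow> quadA u0 u1 u2 u3 * s^2 + quadB u0 u1 u2 u3 * s + quadC u0 u1 u2 u3 = 0"

text \<open>An affine chart of the line spanned by u0, u1, missing only u0; the point u0 is
  excluded by quadA \<noteq> 0.\<close>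
definition line_point :: "complex \<Rightarrow> bform" where
  "line_point s = (\<lambda>i. s * u0 i + u1 i)"

lemma line_point_quartic: "line_point s \<in> quartics"
  using quartic by (simp add: line_point_def quartics_def)

lemma minor01_hess_ne_0:
  assumes root: "flag_root s"
  shows "minor01 (line_point s) (hess (line_point s)) \<noteq> 0"
proof
  assume z: "minor01 (line_point s) (hess (line_point s)) = 0"
  define r1 where "r1 = rem1 u0 u1 u2 u3"
  define r0 where "r0 = rem0 u0 u1 u2 u3"
  have "r1 * s + r0 = 0"
    using cubic_mod_quadratic[of "quadA u0 u1 u2 u3" "cubic3 u0 u1" s "cubic2 u0 u1" "cubic1 u0 u1"
        "cubic0 u0 u1" "quadB u0 u1 u2 u3" "quadC u0 u1 u2 u3"]
      z root minor01_hess_affine[OF quartic(1,2), of s]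
    unfolding r1_def r0_def rem1_def rem0_def flag_root_def line_point_def by simp
  then have "r0 = - r1 * s" by (simp add: eq_neg_iff_add_eq_0 add.commute)
  then have "quad_cubic_res u0 u1 u2 u3
      = r1 * r1 * (quadA u0 u1 u2 u3 * s^2 + quadB u0 u1 u2 u3 * s + quadC u0 u1 u2 u3)"
    unfolding quad_cubic_res_def r1_def[symmetric] r0_def[symmetric]
    by (simp add: power2_eq_square algebra_simps)
  then show False using res_ne_0 root by (simp add: flag_root_def)
qed

lemma lindep_free_at_root: "flag_root s \<Longrightarrow> lindep_free [line_point s, hess (line_point s)]"
  using minor01_hess_ne_0 unfolding minor01_def by (rule lindep_free_pair_if_minor)

lemma hess_pencil_at_root:
  assumes root: "flag_root s"
  shows "hess_pencil_line (line_point s) \<in> H3 \<inter> Omega13 u0 u1 u2 u3"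
proof -
  let ?v = "line_point s" and ?Lam = "lspan [u0, u1, u2, u3]"
  have ind: "lindep_free [?v, hess ?v]" using lindep_free_at_root[OF root] .
  have G14: "hess_pencil_line ?v \<in> G14"
    using line_point_quartic hess_in_quartics ind by (auto simp: G14_def line_basis_def)
  have v_Lam: "?v \<in> ?Lam" unfolding lspan_four_iff line_point_def
    by (rule exI[of _ s], rule exI[of _ 1], rule exI[of _ 0], rule exI[of _ 0], simp)
  have hv_Lam: "hess ?v \<in> ?Lam"
    using cramer_residual_hess_lincomb[OF quartic(1,2), of u2 u3 s 1] root
      in_lspan_if_cramer_residual_eq_0[OF quartic hess_in_quartics[OF line_point_quartic] det4_ne_0]
    by (simp add: flag_root_def line_point_def power2_eq_square mult.assoc)
  have sub: "hess_pencil_line ?v \<subseteq> ?Lam"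
  proof
    fix h assume "h \<in> hess_pencil_line ?v"
    then obtain a b where "h = (\<lambda>i. a * ?v i + b * hess ?v i)" unfolding lspan_pair_iff by blast
    then show "h \<in> ?Lam" using lspan_four_lincomb[OF v_Lam hv_Lam] by simp
  qed
  have "?v \<in> lspan [u0, u1]" unfolding lspan_pair_iff line_point_def
    by (rule exI[of _ s], rule exI[of _ 1], simp)
  then have "?v \<in> hess_pencil_line ?v \<inter> lspan [u0, u1]" using lspan_pair_left by blast
  then show ?thesis
    using G14 sub hess_pencil_in_H3[OF line_point_quartic ind] lindep_free_pair_nonzero[OF ind]
    unfolding Omega13_def by blast
qed

lemma H3_Int_Omega13_hess_pencil:
  assumes L: "L \<in> H3 \<inter> Omega13 u0 u1 u2 u3"
  shows "\<exists>s. flag_root s \<and> L = hess_pencil_line (line_point s)"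
proof -
  obtain f g where B: "line_basis L f g" using L by (auto simp: Omega13_def G14_def)
  have LH: "L \<in> H3" and Lsub: "L \<subseteq> lspan [u0, u1, u2, u3]" and Lfg: "L = lspan [f, g]"
    using L B by (auto simp: Omega13_def line_basis_def)
  obtain v where vL: "v \<in> L" and vl: "v \<in> lspan [u0, u1]" and vnz: "v \<noteq> (\<lambda>i. 0)"
    using L by (auto simp: Omega13_def)
  obtain a b where vab: "v = (\<lambda>i. a * u0 i + b * u1 i)" using vl lspan_pair_iff by blast
  have hv: "hess v \<in> L" by (rule hess_mem_if_in_H3[OF LH B vL])
  then have "cramer_residual u0 u1 u2 u3 (hess v) 4 = 0"
    using Lsub cramer_residual_eq_0_if_in_lspan by blast
  then have Q0: "quadA u0 u1 u2 u3 * a * a + quadB u0 u1 u2 u3 * a * b + quadC u0 u1 u2 u3 * b * b = 0"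
    using cramer_residual_hess_lincomb[OF quartic(1,2)] vab by simp
  have b0: "b \<noteq> 0"
  proof
    assume "b = 0"
    then have "a = 0" using Q0 quadA_ne_0 by simp
    then show False using vnz vab \<open>b = 0\<close> by simp
  qed
  define s where "s = a / b"
  have root: "flag_root s" using Q0 b0
    by (simp add: flag_root_def s_def field_simps power2_eq_square)
  have vs: "v = (\<lambda>i. b * line_point s i)"
    using b0 by (simp add: vab line_point_def s_def fun_eq_iff field_simps)
  have vf: "v \<in> lspan [f, g]" and hvf: "hess v \<in> lspan [f, g]" using vL hv Lfg by simp_all
  have "line_point s \<in> lspan [f, g]"
    using lspan_pair_smult[OF vf, of "1 / b"] b0 by (simp add: vs)
  moreover have "hess (line_point s) \<in> lspan [f, g]"
    using lspan_pair_smult[OF hvf, of "1 / (b * b)"] b0 by (simp add: vs hess_smult[OF line_point_quartic])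
  ultimately have "L = hess_pencil_line (line_point s)"
    using lspan_pair_eq[OF lindep_free_at_root[OF root]] Lfg by simp
  then show ?thesis using root by blast
qed

lemma hess_pencil_at_roots_distinct:
  assumes roots: "flag_root s1" and ne: "s1 \<noteq> s2"
  shows "hess_pencil_line (line_point s1) \<noteq> hess_pencil_line (line_point s2)"
proof
  let ?L = "hess_pencil_line (line_point s1)"
  assume eq: "?L = hess_pencil_line (line_point s2)"
  have v2: "line_point s2 \<in> ?L" unfolding eq by (rule lspan_pair_left)
  have "(\<lambda>i. (1 / (s1 - s2)) * line_point s1 i + (- 1 / (s1 - s2)) * line_point s2 i) \<in> ?L"
    using lspan_pair_lincomb[OF lspan_pair_left v2] .
  moreover have "(\<lambda>i. (1 / (s1 - s2)) * line_point s1 i + (- 1 / (s1 - s2)) * line_point s2 i) = u0"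
  proof
    fix i
    have "(1 / (s1 - s2)) * line_point s1 i + (- 1 / (s1 - s2)) * line_point s2 i
        = (line_point s1 i - line_point s2 i) / (s1 - s2)"
      by (simp add: diff_divide_distrib)
    also have "\<dots> = ((s1 - s2) * u0 i) / (s1 - s2)" by (simp add: line_point_def algebra_simps)
    finally show "(1 / (s1 - s2)) * line_point s1 i + (- 1 / (s1 - s2)) * line_point s2 i = u0 i"
      using ne by simp
  qed
  ultimately have u0L: "u0 \<in> ?L" by simp
  have "(\<lambda>i. 1 * line_point s1 i + (- s1) * u0 i) \<in> ?L"
    using lspan_pair_lincomb[OF lspan_pair_left u0L] .
  then have u1L: "u1 \<in> ?L" by (simp add: line_point_def)
  have "line_basis ?L (line_point s1) (hess (line_point s1))"
    using line_point_quartic hess_in_quartics lindep_free_at_root[OF roots]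
    by (simp add: line_basis_def)
  then have "hess u0 \<in> ?L"
    using hess_mem_if_in_H3[OF IntD1[OF hess_pencil_at_root[OF roots]] _ u0L] by blast
  then show False
    using incidence_eq_0_if_in_lspan[OF u0L u1L] hess_u0_off_line by blast
qed

lemma card_H3_Int_Omega13: "card (H3 \<inter> Omega13 u0 u1 u2 u3) = 2"
proof -
  obtain s1 s2 where ne: "s1 \<noteq> s2" and roots: "\<And>s. flag_root s \<longleftrightarrow> s = s1 \<or> s = s2"
    using quadratic_two_roots[OF quadA_ne_0 discr_ne_0] unfolding flag_root_def by blast
  have "H3 \<inter> Omega13 u0 u1 u2 u3 = {hess_pencil_line (line_point s1), hess_pencil_line (line_point s2)}"
  proof
    show "H3 \<inter> Omega13 u0 u1 u2 u3
        \<subseteq> {hess_pencil_line (line_point s1), hess_pencil_line (line_point s2)}"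
    proof
      fix L assume "L \<in> H3 \<inter> Omega13 u0 u1 u2 u3"
      then obtain s where "flag_root s" "L = hess_pencil_line (line_point s)"
        using H3_Int_Omega13_hess_pencil by blast
      then show "L \<in> {hess_pencil_line (line_point s1), hess_pencil_line (line_point s2)}"
        using roots by auto
    qed
    show "{hess_pencil_line (line_point s1), hess_pencil_line (line_point s2)}
        \<subseteq> H3 \<inter> Omega13 u0 u1 u2 u3"
      using hess_pencil_at_root roots by auto
  qed
  then show ?thesis using hess_pencil_at_roots_distinct roots ne by simp
qed

end

lemma polyfun_minor2:
  assumes "polyvec a" "polyvec b" shows "(\<lambda>x. minor2 (a x) (b x) i j) \<in> polyfun"
  unfolding minor2_def by (intro polyfun_sub polyfun.pmul polyvecD[OF assms(1)] polyvecD[OF assms(2)])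

lemma polyfun_minor3:
  assumes "polyvec a" "polyvec b" "polyvec c" shows "(\<lambda>x. minor3 (a x) (b x) (c x) i j k) \<in> polyfun"
  unfolding minor3_def by (intro polyfun.padd polyfun_sub polyfun.pmul polyvecD[OF assms(1)]
      polyfun_minor2[OF assms(2,3)])

lemma polyfun_det4:
  assumes "polyvec a" "polyvec b" "polyvec c" "polyvec e"
  shows "(\<lambda>x. det4 (a x) (b x) (c x) (e x)) \<in> polyfun"
  unfolding det4_def by (intro polyfun.padd polyfun_sub polyfun.pmul polyvecD[OF assms(1)]
      polyfun_minor3[OF assms(2-4)])

lemma polyfun_cramer_residual:
  assumes "polyvec a" "polyvec b" "polyvec c" "polyvec e" "polyvec w"
  shows "(\<lambda>x. cramer_residual (a x) (b x) (c x) (e x) (w x) k) \<in> polyfun"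
  unfolding cramer_residual_def
  by (intro polyfun.padd polyfun_sub polyfun.pmul polyvecD[OF assms(1)] polyvecD[OF assms(2)]
      polyvecD[OF assms(3)] polyvecD[OF assms(4)] polyvecD[OF assms(5)] polyfun_det4[OF assms(1-4)]
      polyfun_det4[OF assms(5,2-4)] polyfun_det4[OF assms(1,5,3,4)] polyfun_det4[OF assms(1,2,5,4)]
      polyfun_det4[OF assms(1-3,5)])

lemma polyfun_minor01:
  assumes "polyvec a" "polyvec b" shows "(\<lambda>x. minor01 (a x) (b x)) \<in> polyfun"
  unfolding minor01_def by (intro polyfun_sub polyfun.pmul polyvecD[OF assms(1)] polyvecD[OF assms(2)])

lemma polyfun_incidence:
  assumes "polyvec h" "polyvec a" "polyvec b"
  shows "(\<lambda>x. incidence (h x) (pluecker (a x) (b x)) i j k) \<in> polyfun"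
  unfolding incidence_def
  by (intro polyfun.padd polyfun_sub polyfun.pmul polyvecD[OF assms(1)] polyfun_pluecker[OF assms(2,3)])

lemma polyfun_quad:
  assumes "polyvec a" "polyvec b" "polyvec c" "polyvec e"
  shows "(\<lambda>x. quadA (a x) (b x) (c x) (e x)) \<in> polyfun" "(\<lambda>x. quadB (a x) (b x) (c x) (e x)) \<in> polyfun"
    "(\<lambda>x. quadC (a x) (b x) (c x) (e x)) \<in> polyfun"
proof -
  note H = polyvec_hess[OF assms(1)] polyvec_hess[OF assms(2)] polyvec_hess[OF polyvec_add[OF assms(1,2)]]
  show A: "(\<lambda>x. quadA (a x) (b x) (c x) (e x)) \<in> polyfun"
    unfolding quadA_def by (rule polyfun_cramer_residual[OF assms H(1)])
  show C: "(\<lambda>x. quadC (a x) (b x) (c x) (e x)) \<in> polyfun"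
    unfolding quadC_def by (rule polyfun_cramer_residual[OF assms H(2)])
  show "(\<lambda>x. quadB (a x) (b x) (c x) (e x)) \<in> polyfun"
    unfolding quadB_def by (rule polyfun_sub[OF polyfun_sub[OF polyfun_cramer_residual[OF assms H(3)] A] C])
qed

lemma polyfun_cubic:
  assumes "polyvec a" "polyvec b"
  shows "(\<lambda>x. cubic3 (a x) (b x)) \<in> polyfun" "(\<lambda>x. cubic2 (a x) (b x)) \<in> polyfun"
    "(\<lambda>x. cubic1 (a x) (b x)) \<in> polyfun" "(\<lambda>x. cubic0 (a x) (b x)) \<in> polyfun"
proof -
  note H = polyvec_hess[OF assms(1)] polyvec_hess[OF assms(2)] polyvec_hess[OF polyvec_add[OF assms]]
  have cross: "polyvec (\<lambda>x. hess_cross (a x) (b x))"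
    unfolding hess_cross_def by (rule polyvec_diff H)+
  show "(\<lambda>x. cubic3 (a x) (b x)) \<in> polyfun" "(\<lambda>x. cubic2 (a x) (b x)) \<in> polyfun"
    "(\<lambda>x. cubic1 (a x) (b x)) \<in> polyfun" "(\<lambda>x. cubic0 (a x) (b x)) \<in> polyfun"
    unfolding cubic3_def cubic2_def cubic1_def cubic0_def
    by (rule polyfun.padd polyfun_minor01 assms H cross)+
qed

lemma polyfun_quad_cubic_res:
  assumes "polyvec a" "polyvec b" "polyvec c" "polyvec e"
  shows "(\<lambda>x. quad_cubic_res (a x) (b x) (c x) (e x)) \<in> polyfun"
  unfolding quad_cubic_res_def rem1_def rem0_def power2_eq_square
  by (rule polyfun.padd polyfun_sub polyfun.pmul polyfun_quad[OF assms] polyfun_cubic[OF assms(1,2)])+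

definition flag_genericity :: "bform \<Rightarrow> bform \<Rightarrow> bform \<Rightarrow> bform \<Rightarrow> complex" where
  "flag_genericity u0 u1 u2 u3 = det4 u0 u1 u2 u3 * quadA u0 u1 u2 u3
     * ((quadB u0 u1 u2 u3)^2 - 4 * quadA u0 u1 u2 u3 * quadC u0 u1 u2 u3)
     * quad_cubic_res u0 u1 u2 u3 * incidence (hess u0) (pluecker u0 u1) 0 1 2"

lemma polyfun_flag_genericity:
  assumes "polyvec a" "polyvec b" "polyvec c" "polyvec e"
  shows "(\<lambda>x. flag_genericity (a x) (b x) (c x) (e x)) \<in> polyfun"
  unfolding flag_genericity_def power2_eq_square
  by (rule polyfun.pmul polyfun_sub polyfun.pconst polyfun_det4[OF assms] polyfun_quad[OF assms]
      polyfun_quad_cubic_res[OF assms] polyfun_incidence[OF polyvec_hess[OF assms(1)] assms(1,2)])+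

lemma generic_flag_if_flag_genericity:
  assumes "u0 \<in> quartics" "u1 \<in> quartics" "u2 \<in> quartics" "u3 \<in> quartics"
    and "flag_genericity u0 u1 u2 u3 \<noteq> 0"
  shows "generic_flag u0 u1 u2 u3"
  using assms unfolding generic_flag_def flag_genericity_def mult_eq_0_iff de_Morgan_disj by blast

definition sample_frame :: "nat \<times> nat \<Rightarrow> complex" where
  "sample_frame = (\<lambda>(j, i). if j = 0 then (if i = 0 \<or> i = 4 then 1 else 0)
     else if j = 1 then (if i = 1 then 1 else 0)
     else if j = 2 then (if i = 0 then -1 else if i = 2 then 1 else 0)
     else if j = 3 then (if i = 3 then 1 else 0) else 0)"

lemma sample_frame_vec:
  "frame_vec sample_frame 0 = (\<lambda>i. if i = 0 \<or> i = 4 then 1 else 0)"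
  "frame_vec sample_frame 1 = (\<lambda>i. if i = 1 then 1 else 0)"
  "frame_vec sample_frame 2 = (\<lambda>i. if i = 0 then -1 else if i = 2 then 1 else 0)"
  "frame_vec sample_frame 3 = (\<lambda>i. if i = 3 then 1 else 0)"
  by (simp_all add: frame_vec_def sample_frame_def)

lemma sample_frame_quartic: "frame_vec sample_frame j \<in> quartics"
  by (simp add: frame_vec_def sample_frame_def quartics_def)

lemma flag_genericity_sample_frame:
  "flag_genericity (frame_vec sample_frame 0) (frame_vec sample_frame 1)
     (frame_vec sample_frame 2) (frame_vec sample_frame 3) \<noteq> 0"
proof -
  let ?u0 = "frame_vec sample_frame 0" and ?u1 = "frame_vec sample_frame 1"
    and ?u2 = "frame_vec sample_frame 2" and ?u3 = "frame_vec sample_frame 3"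
  have q: "?u0 \<in> quartics" "?u1 \<in> quartics" "(\<lambda>i. ?u0 i + ?u1 i) \<in> quartics"
    using sample_frame_quartic quartics_add by blast+
  have h: "hess ?u0 = (\<lambda>i. if i = 2 then 144 else 0)"
    "hess ?u1 = (\<lambda>i. if i = 0 then -9 else 0)"
    "hess (\<lambda>i. ?u0 i + ?u1 i) = (\<lambda>i. if i = 0 then -9 else if i = 2 then 144 else if i = 3 then 72 else 0)"
    unfolding hess_eq_hess4[OF q(1)] hess_eq_hess4[OF q(2)] hess_eq_hess4[OF q(3)]
    unfolding sample_frame_vec by (simp_all add: hess4_def fun_eq_iff)
  have det: "det4 ?u0 ?u1 ?u2 ?u3 = 1"
    unfolding sample_frame_vec by (simp add: det4_def minor3_def minor2_def)
  have A: "quadA ?u0 ?u1 ?u2 ?u3 = -144" and B: "quadB ?u0 ?u1 ?u2 ?u3 = 0"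
    and C: "quadC ?u0 ?u1 ?u2 ?u3 = 9"
    unfolding quadB_def quadA_def quadC_def h unfolding sample_frame_vec
    by (simp_all add: cramer_residual_def det4_def minor3_def minor2_def)
  have "cubic3 ?u0 ?u1 = 0" "cubic2 ?u0 ?u1 = 0" "cubic1 ?u0 ?u1 = 0" "cubic0 ?u0 ?u1 = 9"
    unfolding cubic3_def cubic2_def cubic1_def cubic0_def hess_cross_def h unfolding sample_frame_vec
    by (simp_all add: minor01_def)
  then have "rem1 ?u0 ?u1 ?u2 ?u3 = 0" "rem0 ?u0 ?u1 ?u2 ?u3 = 186624"
    unfolding rem1_def rem0_def A B C by simp_all
  then have "quad_cubic_res ?u0 ?u1 ?u2 ?u3 \<noteq> 0" unfolding quad_cubic_res_def A B C by simp
  moreover have "incidence (hess ?u0) (pluecker ?u0 ?u1) 0 1 2 = 144"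
    unfolding incidence_def h unfolding sample_frame_vec by (simp add: pluecker_def)
  ultimately show ?thesis unfolding flag_genericity_def det A B C by simp
qed

lemma general_Omega13_meets_H3_twice:
  "\<exists>F \<in> polyfun. (\<exists>u. (\<forall>j<4. frame_vec u j \<in> quartics) \<and> F u \<noteq> 0) \<and>
     (\<forall>u. (\<forall>j<4. frame_vec u j \<in> quartics) \<and>
          lindep_free [frame_vec u 0, frame_vec u 1, frame_vec u 2, frame_vec u 3] \<and> F u \<noteq> 0 \<longrightarrow>
        card (H3 \<inter> Omega13 (frame_vec u 0) (frame_vec u 1) (frame_vec u 2) (frame_vec u 3)) = 2)"
proof (intro bexI[OF _ polyfun_flag_genericity[OF polyvec_frame_vec polyvec_frame_vec
      polyvec_frame_vec polyvec_frame_vec]] conjI allI impI)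
  show "\<exists>u. (\<forall>j<4. frame_vec u j \<in> quartics) \<and> flag_genericity (frame_vec u 0) (frame_vec u 1)
      (frame_vec u 2) (frame_vec u 3) \<noteq> 0"
    using sample_frame_quartic flag_genericity_sample_frame by blast
  fix u assume u: "(\<forall>j<4. frame_vec u j \<in> quartics) \<and>
    lindep_free [frame_vec u 0, frame_vec u 1, frame_vec u 2, frame_vec u 3] \<and>
    flag_genericity (frame_vec u 0) (frame_vec u 1) (frame_vec u 2) (frame_vec u 3) \<noteq> 0"
  then have "generic_flag (frame_vec u 0) (frame_vec u 1) (frame_vec u 2) (frame_vec u 3)"
    by (intro generic_flag_if_flag_genericity) simp_all
  then show "card (H3 \<inter> Omega13 (frame_vec u 0) (frame_vec u 1) (frame_vec u 2) (frame_vec u 3)) = 2"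
    by (rule generic_flag.card_H3_Int_Omega13)
qed

theorem mainTheorem6:
  shows "(\<exists>F \<in> polyfun. (\<exists>p \<in> quartics. F p \<noteq> 0) \<and>
           (\<forall>p \<in> quartics. p \<noteq> (\<lambda>i. 0) \<and> F p \<noteq> 0 \<longrightarrow>
              card (H3 \<inter> Omega04 p) = 1))
       \<and> (\<exists>F \<in> polyfun. (\<exists>u. (\<forall>j<4. frame_vec u j \<in> quartics) \<and> F u \<noteq> 0) \<and>
           (\<forall>u. (\<forall>j<4. frame_vec u j \<in> quartics) \<and>
                lindep_free [frame_vec u 0, frame_vec u 1, frame_vec u 2, frame_vec u 3] \<and>
                F u \<noteq> 0 \<longrightarrow>
              card (H3 \<inter> Omega13 (frame_vec u 0) (frame_vec u 1) (frame_vec u 2) (frame_vec u 3)) = 2))"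
  using general_Omega04_meets_H3_once general_Omega13_meets_H3_twice by (rule conjI)

end
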